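(* Let $p(z)=\sum_{j=0}^d a_j z^j$ be a complex polynomial of degree $d \geq 2$ and let $B$ be a closed convex subset of $\mathbb{C}$ containing all zeros of $p'$. Then the set $C_B$ of all $w \in \mathbb{C}$ such that all zeros of the polynomial $z \mapsto p(z)-w$ lie in $B$ is a convex set.
   Context: Convexity is with respect to the real vector space structure $\mathbb{C}\cong\mathbb{R}^2$. *)

theory Defs
  imports "HOL-Analysis.Analysis" "HOL-Computational_Algebra.Polynomial"
begin

end

theory Submission
  imports Defs "HOL-Computational_Algebra.Fundamental_Theorem_Algebra"
begin

text \<open>If \<open>z \<notin> B\<close>, separate \<open>z\<close> from \<open>B\<close> by an open half-plane
  \<open>{x. Re (cnj u * (z - x)) > 0}\<close>. For every \<open>w\<close> with \<open>p\<^sup>-\<^sup>1(w) \<subseteq> B\<close> all roots \<open>x\<close>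
  of \<open>p - w\<close> lie in that half-plane, so the logarithmic derivative
  \<open>p'(z) / (p(z) - w) = \<Sum> 1 / (z - x)\<close> satisfies \<open>Re (u p'(z) / (p(z) - w)) > 0\<close>.
  This says that \<open>w\<close> lies in an open half-plane which depends only on \<open>z\<close> and misses
  \<open>p(z)\<close>. Hence the set in question is the intersection of these half-planes over all
  \<open>z \<notin> B\<close>, and so it is convex.\<close>

lemma Re_divide_gt_0_iff: "Re (u / v) > 0 \<longleftrightarrow> Re (cnj u * v) > 0"
proof (cases "v = 0")
  case False
  then have "(Re v)\<^sup>2 + (Im v)\<^sup>2 > 0"
    by (simp add: complex_eq_iff sum_power2_gt_zero_iff)
  then show ?thesis by (simp add: Re_divide zero_less_divide_iff)
qed simp

lemma Re_cnj_mult: "Re (cnj a * b) = inner a b"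
  by (simp add: inner_complex_def)

lemma poly_pderiv_prod_linear_divide:
  fixes z :: "'a :: field"
  assumes "\<forall>x\<in>#A. x \<noteq> z"
  shows "poly (pderiv (\<Prod>x\<in>#A. [:-x, 1:])) z / poly (\<Prod>x\<in>#A. [:-x, 1:]) z
           = (\<Sum>x\<in>#A. 1 / (z - x))"
  using assms
proof (induction A)
  case (add a A)
  let ?Q = "\<Prod>x\<in>#A. [:-x, 1:]"
  have "poly ?Q z \<noteq> 0" "z - a \<noteq> 0"
    using add.prems by (auto simp: poly_prod_mset)
  moreover have "poly (pderiv ([:-a, 1:] * ?Q)) z = (z - a) * poly (pderiv ?Q) z + poly ?Q z"
    by (simp only: pderiv_mult poly_add poly_mult) (simp add: pderiv_pCons algebra_simps)
  ultimately have "poly (pderiv ([:-a, 1:] * ?Q)) z / poly ([:-a, 1:] * ?Q) z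
      = 1 / (z - a) + poly (pderiv ?Q) z / poly ?Q z"
    by (simp only: poly_mult) (simp add: field_simps)
  then show ?case
    using add by simp
qed simp

lemma sum_mset_pos:
  fixes f :: "'a \<Rightarrow> 'b :: ordered_comm_monoid_add"
  assumes "A \<noteq> {#}" "\<forall>x\<in>#A. 0 < f x"
  shows "0 < (\<Sum>x\<in>#A. f x)"
  using assms
proof (induction A)
  case (add a A)
  then show ?case
    by (cases "A = {#}") (auto intro: add_pos_pos)
qed simp

lemma Re_sum_mset: "Re (\<Sum>x\<in>#A. f x) = (\<Sum>x\<in>#A. Re (f x))"
  by (induction A) auto

lemma Re_logderiv_gt_0:
  fixes q :: "complex poly"
  assumes "degree q > 0"
    and "\<And>x. poly q x = 0 \<Longrightarrow> Re (cnj u * (z - x)) > 0"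
  shows "Re (u * poly (pderiv q) z / poly q z) > 0"
proof -
  have "q \<noteq> 0" using assms(1) by auto
  then obtain A where size: "size A = degree q"
    and q: "q = smult (lead_coeff q) (\<Prod>x\<in>#A. [:-x, 1:])"
    using alg_closed_imp_factorization by blast
  have "lead_coeff q \<noteq> 0" using \<open>q \<noteq> 0\<close> by simp
  have roots: "Re (cnj u * (z - x)) > 0" if "x \<in># A" for x
  proof -
    from that obtain A' where "A = add_mset x A'" by (metis multi_member_split)
    then have "poly q x = 0" by (subst q) simp
    then show ?thesis by (rule assms(2))
  qed
  then have "\<forall>x\<in>#A. x \<noteq> z" by force
  then have logderiv: "poly (pderiv q) z / poly q z = (\<Sum>x\<in>#A. 1 / (z - x))"
    using \<open>lead_coeff q \<noteq> 0\<close>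
    by (subst (1 2) q) (simp add: pderiv_smult poly_pderiv_prod_linear_divide)
  have "u * poly (pderiv q) z / poly q z = (\<Sum>x\<in>#A. u / (z - x))"
    unfolding times_divide_eq_right[symmetric] logderiv sum_mset_distrib_left by simp
  also have "Re \<dots> > 0"
    using size assms(1) roots by (auto simp: Re_sum_mset Re_divide_gt_0_iff intro!: sum_mset_pos)
  finally show ?thesis .
qed

lemma closed_convex_separating_halfplane_complex:
  fixes B :: "complex set"
  assumes "closed B" "convex B" "z \<notin> B"
  shows "\<exists>u. \<forall>x\<in>B. Re (cnj u * (z - x)) > 0"
proof -
  obtain a b where "inner a z < b" "\<forall>x\<in>B. inner a x > b"
    using separating_hyperplane_closed_point[OF assms(2,1,3)] by blast
  then have "Re (cnj (- a) * (z - x)) > 0" if "x \<in> B" for x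
    using that by (force simp: inner_complex_def algebra_simps)
  then show ?thesis by blast
qed

lemma poly_fibre_in_halfplane_imp_halfplane:
  fixes p :: "complex poly"
  assumes "degree p > 0"
    and "\<And>x. poly p x = w \<Longrightarrow> Re (cnj u * (z - x)) > 0"
  shows "Re (cnj (u * poly (pderiv p) z) * (poly p z - w)) > 0"
proof -
  have "degree (p + [:-w:]) = degree p"
    using assms(1) by (intro degree_add_eq_left) auto
  moreover have "p - [:w:] = p + [:-w:]"
    by simp
  ultimately have "degree (p - [:w:]) = degree p"
    by metis
  moreover have "pderiv (p - [:w:]) = pderiv p"
    by (simp add: pderiv_diff pderiv_pCons)
  ultimately have "Re (u * poly (pderiv p) z / poly (p - [:w:]) z) > 0"
    using Re_logderiv_gt_0[of "p - [:w:]" u z] assms by auto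
  then show ?thesis
    by (simp add: Re_divide_gt_0_iff)
qed

theorem mainTheorem2:
  fixes p :: "complex poly" and B :: "complex set"
  assumes "degree p \<ge> 2"
    and "closed B" and "convex B"
    and "\<And>z. poly (pderiv p) z = 0 \<Longrightarrow> z \<in> B"
  shows "convex {w. \<forall>z. poly (p - [:w:]) z = 0 \<longrightarrow> z \<in> B}"
proof -
  let ?C = "{w. \<forall>z. poly (p - [:w:]) z = 0 \<longrightarrow> z \<in> B}"
  obtain u where u: "\<And>z x. z \<notin> B \<Longrightarrow> x \<in> B \<Longrightarrow> Re (cnj (u z) * (z - x)) > 0"
    using closed_convex_separating_halfplane_complex[OF assms(2,3)] by metis
  define H where "H z = {w. Re (cnj (u z * poly (pderiv p) z) * (poly p z - w)) > 0}" for z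
  have "?C = (\<Inter>z\<in>-B. H z)"
  proof
    show "?C \<subseteq> (\<Inter>z\<in>-B. H z)"
    proof (intro subsetI INT_I)
      fix w z assume "w \<in> ?C" "z \<in> - B"
      then show "w \<in> H z"
        unfolding H_def using assms(1) u
        by (intro CollectI poly_fibre_in_halfplane_imp_halfplane) auto
    qed
    show "(\<Inter>z\<in>-B. H z) \<subseteq> ?C"
    proof (intro subsetI CollectI allI impI)
      fix w z assume w: "w \<in> (\<Inter>z\<in>-B. H z)" and "poly (p - [:w:]) z = 0"
      then have "poly p z = w" by simp
      then have "w \<notin> H z" by (simp add: H_def)
      with w show "z \<in> B" by blast
    qed
  qed
  moreover have "convex (H z)" for z
    unfolding H_def Re_cnj_mult inner_diff_right diff_gt_0_iff_gt by (rule convex_halfspace_lt)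
  ultimately show ?thesis
    by (auto intro: convex_INT)
qed

end
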